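(* Let $(I,J,\emptyset)$ be a reduced presentation with $J\neq\emptyset$, and let $\mathcal Q=\mathcal Q[I,J]$. If $I{\downarrow}\cap J{\downarrow}\supsetneq\{1\}$, then $\mathcal Q$ is not primitive.
   Context: $\mathbf Q(\mathcal K)=\mathbf{ISPP}_u(\mathcal K)$. $\mathbf{\L}_n$ is the Wajsberg hoop on $\{0,\dots,n\}$ with $ab=\max\{a+b-n,0\}$, $a\to b=\min\{n-a+b,n\}$; $\mathbf{\L}_{n,k}$ is the Wajsberg hoop on $\{(r,s)\in\mathbb Z^2:(0,0)\le(r,s)\le(n,k)\}$ (lexicographic order) with the analogous operations using componentwise addition and $u=(n,k)$. $X{\downarrow}$ = set of divisors of elements of $X$. A presentation $(I,J,\emptyset)$ is reduced if $I\cup J\ne\emptyset$, no $m\in I$ divides any element of $(I\setminus\{m\})\cup J$, and no $n\in J$ divides any element of $J\setminus\{n\}$. $\mathcal Q[I,J]=\mathbf Q(\{\mathbf{\L}_i:i\in I\}\cup\{\mathbf{\L}_{j,1}:j\in J\})$. A quasivariety is primitive if every subquasivariety $\mathcal Q'$ satisfies $\mathcal Q'=\mathbf H(\mathcal Q')\cap\mathcal Q$, equivalently every subquasivariety is structural (structural: for every subquasivariety $\mathcal Q''$, $\mathbf H(\mathcal Q'')=\mathbf H(\mathcal Q')$ implies $\mathcal Q''=\mathcal Q'$). *)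

theory Defs
  imports Main
begin

record 'c halg =
  hcarrier :: "'c set"
  hmul :: "'c \<Rightarrow> 'c \<Rightarrow> 'c"
  himp :: "'c \<Rightarrow> 'c \<Rightarrow> 'c"
  hone :: 'c

definition is_alg :: "('c, 'm) halg_scheme \<Rightarrow> bool" where
  "is_alg A \<longleftrightarrow> hone A \<in> hcarrier A \<and>
     (\<forall>x\<in>hcarrier A. \<forall>y\<in>hcarrier A. hmul A x y \<in> hcarrier A \<and> himp A x y \<in> hcarrier A)"

datatype trm = V nat | One | Mul trm trm | Imp trm trm

primrec eval :: "('c, 'm) halg_scheme \<Rightarrow> (nat \<Rightarrow> 'c) \<Rightarrow> trm \<Rightarrow> 'c" where
  "eval A h (V x) = h x"
| "eval A h One = hone A"
| "eval A h (Mul s t) = hmul A (eval A h s) (eval A h t)"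
| "eval A h (Imp s t) = himp A (eval A h s) (eval A h t)"

text \<open>A quasi-identity: a finite list of equations (premises) and a conclusion equation.
  Identities are quasi-identities with no premises.\<close>
type_synonym qid = "(trm \<times> trm) list \<times> (trm \<times> trm)"

definition holds :: "qid \<Rightarrow> ('c, 'm) halg_scheme \<Rightarrow> bool" where
  "holds q A \<longleftrightarrow> (\<forall>h. (\<forall>x. h x \<in> hcarrier A) \<longrightarrow>
      (\<forall>(s,t)\<in>set (fst q). eval A h s = eval A h t) \<longrightarrow>
      eval A h (fst (snd q)) = eval A h (snd (snd q)))"

type_synonym alg = "nat halg"

definition quasivariety :: "alg set \<Rightarrow> bool" where
  "quasivariety C \<longleftrightarrow> (\<exists>\<Sigma>. C = {A. is_alg A \<and> (\<forall>q\<in>\<Sigma>. holds q A)})"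

definition is_hom :: "('a, 'm) halg_scheme \<Rightarrow> ('b, 'n) halg_scheme \<Rightarrow> ('a \<Rightarrow> 'b) \<Rightarrow> bool" where
  "is_hom A B f \<longleftrightarrow> f ` hcarrier A \<subseteq> hcarrier B \<and> f (hone A) = hone B \<and>
     (\<forall>x\<in>hcarrier A. \<forall>y\<in>hcarrier A.
        f (hmul A x y) = hmul B (f x) (f y) \<and> f (himp A x y) = himp B (f x) (f y))"

definition Hcl :: "alg set \<Rightarrow> alg set" where
  "Hcl C = {B. is_alg B \<and> (\<exists>A\<in>C. \<exists>f. is_hom A B f \<and> f ` hcarrier A = hcarrier B)}"

definition primitive :: "alg set \<Rightarrow> bool" where
  "primitive Q \<longleftrightarrow> (\<forall>Q'. quasivariety Q' \<and> Q' \<subseteq> Q \<longrightarrow> Q' = Hcl Q' \<inter> Q)"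

definition Luk :: "nat \<Rightarrow> nat halg" where
  "Luk n = \<lparr> hcarrier = {0..n}, hmul = (\<lambda>a b. a + b - n),
            himp = (\<lambda>a b. min (n - a + b) n), hone = n \<rparr>"

definition lexle :: "int \<times> int \<Rightarrow> int \<times> int \<Rightarrow> bool" where
  "lexle a b \<longleftrightarrow> fst a < fst b \<or> (fst a = fst b \<and> snd a \<le> snd b)"

definition lexmax :: "int \<times> int \<Rightarrow> int \<times> int \<Rightarrow> int \<times> int" where
  "lexmax a b = (if lexle a b then b else a)"

definition lexmin :: "int \<times> int \<Rightarrow> int \<times> int \<Rightarrow> int \<times> int" where
  "lexmin a b = (if lexle a b then a else b)"

definition Luk2 :: "nat \<Rightarrow> nat \<Rightarrow> (int \<times> int) halg" where
  "Luk2 n k = \<lparr> hcarrier = {p. lexle (0,0) p \<and> lexle p (int n, int k)},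
      hmul = (\<lambda>a b. lexmax (fst a + fst b - int n, snd a + snd b - int k) (0,0)),
      himp = (\<lambda>a b. lexmin (int n - fst a + fst b, int k - snd a + snd b) (int n, int k)),
      hone = (int n, int k) \<rparr>"

text \<open>Q[I,J] = Q({L_i : i \<in> I} \<union> {L_{j,1} : j \<in> J}): all algebras satisfying every
  quasi-identity valid in all generators.\<close>
definition QIJ :: "nat set \<Rightarrow> nat set \<Rightarrow> alg set" where
  "QIJ I J = {A. is_alg A \<and> (\<forall>q. (\<forall>i\<in>I. holds q (Luk i)) \<and> (\<forall>j\<in>J. holds q (Luk2 j 1))
                                   \<longrightarrow> holds q A)}"

definition down :: "nat set \<Rightarrow> nat set" where
  "down X = {d. \<exists>x\<in>X. d dvd x}"

definition reduced :: "nat set \<Rightarrow> nat set \<Rightarrow> bool" where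
  "reduced I J \<longleftrightarrow> I \<union> J \<noteq> {} \<and>
     (\<forall>m\<in>I. \<forall>x\<in>(I - {m}) \<union> J. \<not> m dvd x) \<and>
     (\<forall>n\<in>J. \<forall>x\<in>J - {n}. \<not> n dvd x)"

end

theory Submission
  imports Defs "HOL-Library.Countable"
begin

(* Let d > 1 divide some i \<in> I and some j \<in> J.
   Scaling the first coordinate embeds L_{d,1} into L_{j,1}, and L_d embeds into L_i, so
   Q' = Q(L_{d,1}) is a subquasivariety of Q and L_d \<in> Q. The first projection maps L_{d,1}
   onto L_d, so L_d \<in> H(Q'). But L_d \<notin> Q': the quasi-identity
   x^d = x^(d+1), x = x^(d-1) \<rightarrow> x^d  \<Longrightarrow>  x = 1  holds in L_{d,1} and fails at the coatom
   of L_d. Hence Q' \<noteq> H(Q') \<inter> Q. *)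

lemma eval_closed:
  assumes "is_alg A" "\<forall>x. h x \<in> hcarrier A"
  shows "eval A h t \<in> hcarrier A"
  using assms by (induction t) (auto simp: is_alg_def)

lemma eval_hom:
  assumes "is_alg A" "is_hom A B f" "\<forall>x. h x \<in> hcarrier A"
  shows "eval B (f \<circ> h) t = f (eval A h t)"
  using assms eval_closed[OF assms(1,3)] by (induction t) (auto simp: is_hom_def)

lemma holdsD:
  assumes "holds q A" "\<forall>x. h x \<in> hcarrier A"
    and "\<And>s t. (s, t) \<in> set (fst q) \<Longrightarrow> eval A h s = eval A h t"
  shows "eval A h (fst (snd q)) = eval A h (snd (snd q))"
  using assms unfolding holds_def by fast

lemma holds_embedding:
  assumes "is_alg A" "is_hom A B f" "inj_on f (hcarrier A)" "holds q B"
  shows "holds q A"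
  unfolding holds_def
proof (intro allI impI)
  fix h assume h: "\<forall>x. h x \<in> hcarrier A"
    and prems: "\<forall>(s, t)\<in>set (fst q). eval A h s = eval A h t"
  have "eval B (f \<circ> h) (fst (snd q)) = eval B (f \<circ> h) (snd (snd q))"
  proof (rule holdsD[OF assms(4)])
    show "\<forall>x. (f \<circ> h) x \<in> hcarrier B"
      using h assms(2) by (auto simp: is_hom_def)
    show "eval B (f \<circ> h) s = eval B (f \<circ> h) t" if "(s, t) \<in> set (fst q)" for s t
      using prems that eval_hom[OF assms(1,2) h] by auto
  qed
  then show "eval A h (fst (snd q)) = eval A h (snd (snd q))"
    using eval_hom[OF assms(1,2) h] eval_closed[OF assms(1) h] assms(3) by (simp add: inj_on_eq_iff)
qed

lemma is_hom_comp: "is_hom A B f \<Longrightarrow> is_hom B C g \<Longrightarrow> is_hom A C (g \<circ> f)"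
  unfolding is_hom_def by (auto simp: image_subset_iff)

definition quasivariety_of :: "('c, 'm) halg_scheme \<Rightarrow> alg set" where
  "quasivariety_of L = {A. is_alg A \<and> (\<forall>q. holds q L \<longrightarrow> holds q A)}"

lemma not_primitiveI:
  assumes "quasivariety Q'" "Q' \<subseteq> Q" "A \<in> Hcl Q' \<inter> Q" "A \<notin> Q'"
  shows "\<not> primitive Q"
  using assms unfolding primitive_def by blast

lemma quasivariety_quasivariety_of: "quasivariety (quasivariety_of L)"
  unfolding quasivariety_def quasivariety_of_def by (intro exI[of _ "{q. holds q L}"]) auto

(* Classes of algebras live over nat, so L_{d,1} enters them through an isomorphic copy. *)
definition nat_copy :: "('c::countable) halg \<Rightarrow> alg" where
  "nat_copy L = \<lparr> hcarrier = to_nat ` hcarrier L,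
     hmul = (\<lambda>x y. to_nat (hmul L (from_nat x) (from_nat y))),
     himp = (\<lambda>x y. to_nat (himp L (from_nat x) (from_nat y))),
     hone = to_nat (hone L) \<rparr>"

lemma is_alg_nat_copy: "is_alg L \<Longrightarrow> is_alg (nat_copy L)"
  by (auto simp: nat_copy_def is_alg_def)

lemma from_nat_iso_nat_copy:
  fixes L :: "('c::countable) halg"
  assumes "is_alg L"
  shows "is_hom (nat_copy L) L from_nat" and "inj_on (from_nat :: nat \<Rightarrow> 'c) (hcarrier (nat_copy L))"
    and "from_nat ` hcarrier (nat_copy L) = hcarrier L"
  using assms by (auto simp: nat_copy_def is_alg_def is_hom_def inj_on_def image_image from_nat_to_nat)

lemma Hcl_quasivariety_of_hom_image:
  fixes L :: "('c::countable) halg"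
  assumes "is_alg L" "is_alg B" "is_hom L B f" "f ` hcarrier L = hcarrier B"
  shows "B \<in> Hcl (quasivariety_of L)"
proof -
  have "nat_copy L \<in> quasivariety_of L"
    unfolding quasivariety_of_def
    using is_alg_nat_copy holds_embedding from_nat_iso_nat_copy assms(1) by blast
  moreover have "is_hom (nat_copy L) B (f \<circ> from_nat)"
    using is_hom_comp from_nat_iso_nat_copy(1) assms(1,3) by blast
  moreover have "(f \<circ> from_nat) ` hcarrier (nat_copy L) = hcarrier B"
    using from_nat_iso_nat_copy(3)[OF assms(1)] assms(4) by (metis image_comp)
  ultimately show ?thesis
    unfolding Hcl_def using assms(2) by blast
qed

lemma is_alg_Luk: "is_alg (Luk n)"
  by (auto simp: is_alg_def Luk_def)

lemma is_alg_Luk2: "is_alg (Luk2 n k)"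
  by (auto simp: is_alg_def Luk2_def lexle_def lexmax_def lexmin_def)

lemma is_hom_Luk_scale:
  assumes "m > 0"
  shows "is_hom (Luk d) (Luk (d * m)) (\<lambda>a. a * m)"
proof -
  have "min (d - a + b) d * m = min (d * m - a * m + b * m) (d * m)" if "a \<le> d" for a b
  proof -
    have "min x y * m = min (x * m) (y * m)" for x y :: nat
      using assms by (simp add: min_def)
    then show ?thesis
      using that by (simp add: diff_mult_distrib add_mult_distrib)
  qed
  then show ?thesis
    by (auto simp: is_hom_def Luk_def diff_mult_distrib add_mult_distrib)
qed

lemma holds_Luk_dvd:
  assumes "holds q (Luk n)" "d dvd n" "n > 0"
  shows "holds q (Luk d)"
proof -
  obtain m where m: "n = d * m" using assms(2) by blast
  with assms(3) have "m > 0" by simp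
  then show ?thesis
    using holds_embedding[OF is_alg_Luk is_hom_Luk_scale] assms(1) m
    by (simp add: inj_on_def)
qed

definition scale_fst :: "int \<Rightarrow> int \<times> int \<Rightarrow> int \<times> int" where
  "scale_fst m p = (fst p * m, snd p)"

lemma lexle_scale_fst: "m > 0 \<Longrightarrow> lexle (scale_fst m p) (scale_fst m q) = lexle p q"
  by (auto simp: scale_fst_def lexle_def)

lemma scale_fst_lexmax: "m > 0 \<Longrightarrow> scale_fst m (lexmax p q) = lexmax (scale_fst m p) (scale_fst m q)"
  by (simp add: lexmax_def lexle_scale_fst)

lemma scale_fst_lexmin: "m > 0 \<Longrightarrow> scale_fst m (lexmin p q) = lexmin (scale_fst m p) (scale_fst m q)"
  by (simp add: lexmin_def lexle_scale_fst)

lemma is_hom_Luk2_scale: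
  assumes "m > 0"
  shows "is_hom (Luk2 d k) (Luk2 (d * m) k) (scale_fst (int m))"
proof -
  have m: "int m > 0" using assms by simp
  have "lexle (0,0) (scale_fst (int m) p) \<and> lexle (scale_fst (int m) p) (int (d * m), int k)"
    if "lexle (0,0) p" "lexle p (int d, int k)" for p
    using lexle_scale_fst[OF m, of "(0,0)" p] lexle_scale_fst[OF m, of p "(int d, int k)"] that
    by (simp add: scale_fst_def mult.commute)
  moreover have "scale_fst (int m) (lexmax (fst a + fst b - int d, snd a + snd b - int k) (0,0))
     = lexmax (fst (scale_fst (int m) a) + fst (scale_fst (int m) b) - int (d * m),
               snd (scale_fst (int m) a) + snd (scale_fst (int m) b) - int k) (0,0)" for a b
    using scale_fst_lexmax[OF m, of "(fst a + fst b - int d, snd a + snd b - int k)" "(0,0)"]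
    by (simp add: scale_fst_def algebra_simps)
  moreover have "scale_fst (int m) (lexmin (int d - fst a + fst b, int k - snd a + snd b) (int d, int k))
     = lexmin (int (d * m) - fst (scale_fst (int m) a) + fst (scale_fst (int m) b),
               int k - snd (scale_fst (int m) a) + snd (scale_fst (int m) b)) (int (d * m), int k)" for a b
    using scale_fst_lexmin[OF m, of "(int d - fst a + fst b, int k - snd a + snd b)" "(int d, int k)"]
    by (simp add: scale_fst_def algebra_simps)
  ultimately show ?thesis
    using m by (auto simp: is_hom_def Luk2_def scale_fst_def)
qed

lemma holds_Luk2_dvd:
  assumes "holds q (Luk2 n k)" "d dvd n" "n > 0"
  shows "holds q (Luk2 d k)"
proof -
  obtain m where m: "n = d * m" using assms(2) by blast
  with assms(3) have "m > 0" by simp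
  then show ?thesis
    using holds_embedding[OF is_alg_Luk2 is_hom_Luk2_scale] assms(1) m
    by (simp add: inj_on_def scale_fst_def prod_eq_iff)
qed

lemma fst_lexmax: "fst (lexmax p q) = max (fst p) (fst q)"
  by (auto simp: lexmax_def lexle_def)

lemma fst_lexmin: "fst (lexmin p q) = min (fst p) (fst q)"
  by (auto simp: lexmin_def lexle_def)

lemma Luk2_fst_onto_Luk:
  shows "is_hom (Luk2 n k) (Luk n) (\<lambda>p. nat (fst p))"
    and "(\<lambda>p. nat (fst p)) ` hcarrier (Luk2 n k) = hcarrier (Luk n)"
proof -
  show "is_hom (Luk2 n k) (Luk n) (\<lambda>p. nat (fst p))"
    by (auto simp: is_hom_def Luk2_def Luk_def lexle_def fst_lexmax fst_lexmin nat_diff_distrib')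
  have "a \<in> (\<lambda>p. nat (fst p)) ` hcarrier (Luk2 n k)" if "a \<le> n" for a
    using that by (intro image_eqI[of _ _ "(int a, 0)"]) (auto simp: Luk2_def lexle_def)
  then show "(\<lambda>p. nat (fst p)) ` hcarrier (Luk2 n k) = hcarrier (Luk n)"
    by (auto simp: Luk2_def Luk_def lexle_def)
qed

primrec var_pow :: "nat \<Rightarrow> trm" where
  "var_pow 0 = One"
| "var_pow (Suc k) = Mul (var_pow k) (V 0)"

lemma eval_var_pow_Luk:
  assumes "h 0 \<le> n"
  shows "eval (Luk n) h (var_pow k) = n - k * (n - h 0)"
  using assms by (induction k) (auto simp: Luk_def)

lemma eval_var_pow_Luk2:
  assumes "h 0 = (r, s)" "h 0 \<in> hcarrier (Luk2 n m)"
  shows "eval (Luk2 n m) h (var_pow k)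
           = lexmax (int n - int k * (int n - r), int m - int k * (int m - s)) (0,0)"
  using assms
  by (induction k) (auto simp: Luk2_def lexmax_def lexle_def algebra_simps)

lemma himp_Luk2_zero:
  assumes "y \<in> hcarrier (Luk2 n k)"
  shows "himp (Luk2 n k) y (0,0) = (int n - fst y, int k - snd y)"
  using assms by (auto simp: Luk2_def lexmin_def lexle_def)

(* Hoops have no constant 0: the premise x^d = x^(d+1) says x^d is idempotent, which in the
   chains at hand means x = 1 or x^d = 0; in the latter case the second premise reads
   x = \<not> x^(d-1). *)
definition sep_qid :: "nat \<Rightarrow> qid" where
  "sep_qid d = ([(var_pow d, var_pow (Suc d)), (V 0, Imp (var_pow (d - 1)) (var_pow d))], (V 0, One))"

lemma not_holds_sep_qid_Luk:
  assumes "d \<ge> 2"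
  shows "\<not> holds (sep_qid d) (Luk d)"
proof
  assume holds: "holds (sep_qid d) (Luk d)"
  let ?h = "\<lambda>_. d - 1"
  have pow: "eval (Luk d) ?h (var_pow k) = d - k" for k
    using eval_var_pow_Luk[of ?h d k] assms by simp
  have "eval (Luk d) ?h (fst (snd (sep_qid d))) = eval (Luk d) ?h (snd (snd (sep_qid d)))"
  proof (rule holdsD[OF holds])
    show "\<forall>x. ?h x \<in> hcarrier (Luk d)"
      by (simp add: Luk_def)
    have "eval (Luk d) ?h (var_pow d) = eval (Luk d) ?h (var_pow (Suc d))"
      by (simp only: pow)
    moreover have "eval (Luk d) ?h (V 0) = eval (Luk d) ?h (Imp (var_pow (d - 1)) (var_pow d))"
      using assms by (simp only: eval.simps(1,4) pow) (simp add: Luk_def)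
    ultimately show "eval (Luk d) ?h s = eval (Luk d) ?h t" if "(s, t) \<in> set (fst (sep_qid d))" for s t
      using that by (auto simp: sep_qid_def simp del: eval.simps var_pow.simps)
  qed
  then show False
    using assms by (simp add: sep_qid_def Luk_def)
qed

lemma holds_sep_qid_Luk2:
  assumes "d \<ge> 2"
  shows "holds (sep_qid d) (Luk2 d 1)"
  unfolding holds_def
proof (intro allI impI)
  fix h assume h: "\<forall>x. h x \<in> hcarrier (Luk2 d 1)"
    and prems: "\<forall>(s, t)\<in>set (fst (sep_qid d)). eval (Luk2 d 1) h s = eval (Luk2 d 1) h t"
  obtain r s where x: "h 0 = (r, s)" by fastforce
  define pow where "pow k = lexmax (int d - int k * (int d - r), 1 - int k * (1 - s)) (0,0)" for k
  have eval_pow: "eval (Luk2 d 1) h (var_pow k) = pow k" for k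
    using eval_var_pow_Luk2[of h r s d 1 k] x h[rule_format, of 0] unfolding pow_def by simp
  have "(var_pow d, var_pow (Suc d)) \<in> set (fst (sep_qid d))"
    and "(V 0, Imp (var_pow (d - 1)) (var_pow d)) \<in> set (fst (sep_qid d))"
    by (simp_all add: sep_qid_def)
  then have idem: "pow d = pow (Suc d)"
    and coatom: "(r, s) = himp (Luk2 d 1) (pow (d - 1)) (pow d)"
    using prems by (fastforce simp only: eval.simps(1,4) eval_pow x)+
  have "(r, s) = (int d, 1)"
  proof (cases "pow d = (0,0)")
    case False
    then show ?thesis
      using idem by (auto simp: pow_def lexmax_def algebra_simps split: if_splits)
  next
    case True
    have "pow (d - 1) \<in> hcarrier (Luk2 d 1)"
      using eval_pow[of "d - 1"] eval_closed[OF is_alg_Luk2 h] by metis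
    then have neg: "pow (d - 1) = (int d - r, 1 - s)"
      using coatom True himp_Luk2_zero by simp
    show ?thesis
    proof (cases "pow (d - 1) = (0,0)")
      case True
      then show ?thesis using neg by simp
    next
      case False
      then have "1 - int (d - 1) * (1 - s) = 1 - s" \<comment> \<open>second coordinates of x^(d-1) = \<not> x\<close>
        using neg by (simp add: pow_def lexmax_def split: if_splits)
      then have "int d * (1 - s) = 1"
        using assms by (simp add: of_nat_diff algebra_simps)
      then have "int d dvd 1"
        by (metis dvd_triv_left)
      then show ?thesis
        using assms by simp
    qed
  qed
  then show "eval (Luk2 d 1) h (fst (snd (sep_qid d))) = eval (Luk2 d 1) h (snd (snd (sep_qid d)))"
    by (simp add: sep_qid_def x Luk2_def)
qed

lemma Luk_in_QIJ:
  assumes "i \<in> I" "d dvd i" "i > 0"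
  shows "Luk d \<in> QIJ I J"
  unfolding QIJ_def using is_alg_Luk holds_Luk_dvd assms by blast

lemma quasivariety_of_Luk2_subset_QIJ:
  assumes "j \<in> J" "d dvd j" "j > 0"
  shows "quasivariety_of (Luk2 d 1) \<subseteq> QIJ I J"
  unfolding quasivariety_of_def QIJ_def using holds_Luk2_dvd assms by blast

lemma Luk_in_Hcl_quasivariety_of_Luk2: "Luk n \<in> Hcl (quasivariety_of (Luk2 n k))"
  using Hcl_quasivariety_of_hom_image[OF is_alg_Luk2 is_alg_Luk Luk2_fst_onto_Luk] .

lemma Luk_notin_quasivariety_of_Luk2: "d \<ge> 2 \<Longrightarrow> Luk d \<notin> quasivariety_of (Luk2 d 1)"
  unfolding quasivariety_of_def using not_holds_sep_qid_Luk holds_sep_qid_Luk2 by blast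

theorem proposition4p13:
  fixes I J :: "nat set"
  assumes "finite I" and "finite J" and "0 \<notin> I \<union> J"
    and "reduced I J" and "J \<noteq> {}"
    and "{1} \<subset> down I \<inter> down J"
  shows "\<not> primitive (QIJ I J)"
proof -
  obtain d where "d \<in> down I" "d \<in> down J" "d \<noteq> 1"
    using assms(6) by blast
  then obtain i j where i: "i \<in> I" "d dvd i" and j: "j \<in> J" "d dvd j"
    by (auto simp: down_def)
  have "i > 0" "j > 0"
    using assms(3) i(1) j(1) by (auto intro: gr0I)
  with \<open>d \<noteq> 1\<close> i(2) have "d \<ge> 2"
    by (cases "d = 0") auto
  show ?thesis
  proof (rule not_primitiveI)
    show "quasivariety (quasivariety_of (Luk2 d 1))"
      by (rule quasivariety_quasivariety_of)
    show "quasivariety_of (Luk2 d 1) \<subseteq> QIJ I J"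
      using quasivariety_of_Luk2_subset_QIJ j \<open>j > 0\<close> .
    show "Luk d \<in> Hcl (quasivariety_of (Luk2 d 1)) \<inter> QIJ I J"
      using Luk_in_Hcl_quasivariety_of_Luk2 Luk_in_QIJ i \<open>i > 0\<close> by blast
    show "Luk d \<notin> quasivariety_of (Luk2 d 1)"
      using Luk_notin_quasivariety_of_Luk2 \<open>d \<ge> 2\<close> .
  qed
qed

end
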